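(* Let $\bullet\in\{0,L_p,L,1_p,1\}$, $\mathbf{x}_0\in\mathbb{R}^d$ and $\mathbf{A}\in C^\bullet_{\mathbf{x}_0}(\mathbb{R}^d,\mathbb{R}^{m\times n})$. Then the pointwise Moore–Penrose pseudoinverse $\mathbf{A}^+:\mathbb{R}^d\to\mathbb{R}^{n\times m}$, $\mathbf{x}\mapsto \mathbf{A}(\mathbf{x})^+$, belongs to $C^\bullet_{\mathbf{x}_0}$ if and only if $\lim_{\mathbf{x}\to\mathbf{x}_0}\mathrm{rank}(\mathbf{A}(\mathbf{x}))=\mathrm{rank}(\mathbf{A}(\mathbf{x}_0))$ (i.e. the rank of $\mathbf{A}$ is constant on a neighborhood of $\mathbf{x}_0$).
   Context: Regularity classes: for finite-dimensional normed spaces $X,Y$, $D\subset X$, $f:D\to Y$, $x_0\in D$, write $f\in C^\bullet_{x_0}$ if, respectively, ($\bullet=0$) $f$ is continuous at $x_0$; ($L_p$) $f$ is pointwise Lipschitz at $x_0$, i.e. there are $r>0,L\ge 0$ with $x_0+rB_X\subset D$ and $\|f(x)-f(x_0)\|\le L\|x-x_0\|$ for $x\in x_0+rB_X$; ($L$) $f$ is Lipschitz on a neighborhood of $x_0$; ($1_p$) $f$ is Fréchet differentiable at $x_0$; ($1$) $f$ is differentiable on a neighborhood of $x_0$ and its derivative is continuous at $x_0$. $B_X$ is the closed unit ball. Matrices carry the spectral norm. *)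

theory Defs
  imports "HOL-Analysis.Analysis"
begin

definition pinv :: "real^'n^'m \<Rightarrow> real^'m^'n" where
  "pinv A = (THE B. A ** B ** A = A \<and> B ** A ** B = B \<and>
                    transpose (A ** B) = A ** B \<and> transpose (B ** A) = B ** A)"

datatype regclass = Reg0 | RegLp | RegL | Reg1p | Reg1

definition ptwise_lipschitz_at :: "('a::real_normed_vector \<Rightarrow> 'b::real_normed_vector) \<Rightarrow> 'a \<Rightarrow> bool" where
  "ptwise_lipschitz_at f x0 \<longleftrightarrow>
     (\<exists>r>0. \<exists>L\<ge>0. \<forall>x\<in>cball x0 r. norm (f x - f x0) \<le> L * norm (x - x0))"

definition locally_lipschitz_at :: "('a::real_normed_vector \<Rightarrow> 'b::real_normed_vector) \<Rightarrow> 'a \<Rightarrow> bool" where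
  "locally_lipschitz_at f x0 \<longleftrightarrow> (\<exists>r>0. \<exists>L. L-lipschitz_on (ball x0 r) f)"

definition C1_at :: "('a::real_normed_vector \<Rightarrow> 'b::real_normed_vector) \<Rightarrow> 'a \<Rightarrow> bool" where
  "C1_at f x0 \<longleftrightarrow> (\<exists>r>0. \<exists>f' :: 'a \<Rightarrow> ('a \<Rightarrow>\<^sub>L 'b).
      (\<forall>x\<in>ball x0 r. (f has_derivative blinfun_apply (f' x)) (at x)) \<and> isCont f' x0)"

fun regular_at :: "regclass \<Rightarrow> ('a::real_normed_vector \<Rightarrow> 'b::real_normed_vector) \<Rightarrow> 'a \<Rightarrow> bool" where
  "regular_at Reg0 f x0 = isCont f x0"
| "regular_at RegLp f x0 = ptwise_lipschitz_at f x0"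
| "regular_at RegL f x0 = locally_lipschitz_at f x0"
| "regular_at Reg1p f x0 = (f differentiable (at x0))"
| "regular_at Reg1 f x0 = C1_at f x0"

end

theory Submission
  imports Defs "HOL-Real_Asymp.Multiseries_Expansion"
begin

text \<open>
  Wedin's identity expresses \<open>B\<^sup>+ - A\<^sup>+\<close> as a sum of three products, each containing
  \<open>E = B - A\<close> once and otherwise only \<open>A, B, A\<^sup>+, B\<^sup>+\<close>. Hence the pseudoinverse is Lipschitz
  on any set of matrices of equal rank on which it is bounded, and differentiable along it. Near \<open>A\<close>,
  the pseudoinverses of the matrices of rank \<open>rank A\<close> are bounded: otherwise a normalised
  limit \<open>C\<close> of blowing-up pseudoinverses would satisfy \<open>A C A = 0\<close> and \<open>C = Q C P\<close>, where
  \<open>P, Q\<close> are limits of the orthogonal projections \<open>B B\<^sup>+, B\<^sup>+ B\<close>; nearby projections have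
  equal rank, so \<open>P, Q\<close> project onto the column and row space of \<open>A\<close>, and \<open>C = 0\<close>, contradicting
  \<open>\<parallel>C\<parallel> = 1\<close>. Composing with \<open>A\<close> transfers every regularity class from \<open>A\<close> to \<open>A\<^sup>+\<close> when the
  rank is locally constant. Conversely, if \<open>A\<^sup>+\<close> is continuous then so is the projection
  \<open>A A\<^sup>+\<close>, whose rank is \<open>rank A\<close>.
\<close>

text \<open>The library simp rule rewriting \<open>transpose M *v x\<close> to \<open>x v* M\<close> obstructs the adjoint
  arguments below.\<close>
declare transpose_matrix_vector [simp del]

section \<open>Frobenius norm of matrices\<close>

text \<open>The norm of \<open>real^'n^'m\<close> is the Frobenius norm, not the spectral norm; being
  equivalent, the two norms define the same regularity classes.\<close>

lemma bilinear_matrix_mult: "bilinear ((**) :: real^'n^'m \<Rightarrow> real^'p^'n \<Rightarrow> real^'p^'m)"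
  unfolding bilinear_def
  by (auto intro!: linearI simp: matrix_add_ldistrib scalar_matrix_assoc matrix_scalar_ac)
     (vector matrix_matrix_mult_def sum.distrib[symmetric] field_simps)

interpretation matrix_mult: bounded_bilinear "(**) :: real^'n^'m \<Rightarrow> real^'p^'n \<Rightarrow> real^'p^'m"
  using bilinear_matrix_mult by (simp add: bilinear_conv_bounded_bilinear)

lemma linear_transpose: "linear (transpose :: real^'n^'m \<Rightarrow> real^'m^'n)"
  by (rule linearI) (vector transpose_def)+

lemmas transpose_add = linear_add[OF linear_transpose]
  and transpose_diff = linear_diff[OF linear_transpose]
  and transpose_minus = linear_neg[OF linear_transpose]
  and tendsto_transpose =
    bounded_linear.tendsto[OF linear_transpose[unfolded linear_conv_bounded_linear]]

lemma norm_matrix_power2: "norm (A::real^'n^'m) ^ 2 = (\<Sum>i\<in>UNIV. norm (A $ i) ^ 2)"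
  by (simp only: power2_norm_eq_inner inner_vec_def)

lemma norm_matrix_power2_entries: "norm (A::real^'n^'m) ^ 2 = (\<Sum>i\<in>UNIV. \<Sum>j\<in>UNIV. (A $ i $ j) ^ 2)"
  unfolding power2_norm_eq_inner inner_vec_def by (simp add: power2_eq_square)

lemma norm_transpose: "norm (transpose (A::real^'n^'m)) = norm A"
proof -
  have "norm (transpose A) ^ 2 = norm A ^ 2"
    unfolding norm_matrix_power2_entries transpose_def by (simp, rule sum.swap)
  then show ?thesis by (simp add: power2_eq_iff_nonneg)
qed

lemma norm_matrix_vector_mult_le: "norm ((M::real^'n^'m) *v x) \<le> norm M * norm x"
proof -
  have "norm (M *v x) ^ 2 = (\<Sum>i\<in>UNIV. (M $ i \<bullet> x) ^ 2)"
    unfolding power2_norm_eq_inner inner_vec_def[of "M *v x" "M *v x"] matrix_vector_mul_component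
    by (simp add: power2_eq_square)
  also have "\<dots> \<le> (\<Sum>i\<in>UNIV. norm (M $ i) ^ 2 * norm x ^ 2)"
    by (intro sum_mono) (metis Cauchy_Schwarz_ineq power2_norm_eq_inner)
  also have "\<dots> = (norm M * norm x) ^ 2"
    by (simp add: norm_matrix_power2 sum_distrib_right power_mult_distrib)
  finally show ?thesis by (rule power2_le_imp_le) simp
qed

lemma norm_matrix_mult_le: "norm ((A::real^'n^'m) ** (B::real^'p^'n)) \<le> norm A * norm B"
proof -
  have row: "(A ** B) $ i = transpose B *v (A $ i)" for i
    by (simp add: vec_eq_iff matrix_matrix_mult_def vector_matrix_mult_def transpose_matrix_vector)
  have "norm (A ** B) ^ 2 = (\<Sum>i\<in>UNIV. norm (transpose B *v (A $ i)) ^ 2)"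
    by (simp only: norm_matrix_power2 row)
  also have "\<dots> \<le> (\<Sum>i\<in>UNIV. (norm B * norm (A $ i)) ^ 2)"
    by (intro sum_mono power_mono) (metis norm_transpose norm_matrix_vector_mult_le, simp)
  also have "\<dots> = (norm A * norm B) ^ 2"
    by (simp only: power_mult_distrib sum_distrib_left[symmetric] norm_matrix_power2[symmetric]
        mult.commute)
  finally show ?thesis by (rule power2_le_imp_le) simp
qed

lemma norm_matrix_mult3_le:
  "norm ((A::real^'n^'m) ** (B::real^'p^'n) ** (C::real^'q^'p)) \<le> norm A * norm B * norm C"
  by (meson mult_right_mono norm_ge_zero norm_matrix_mult_le order_trans)

lemma norm_matrix_mult4_le:
  "norm ((A::real^'n^'m) ** (B::real^'p^'n) ** (C::real^'q^'p) ** (D::real^'r^'q))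
     \<le> norm A * norm B * norm C * norm D"
  by (meson mult_right_mono norm_ge_zero norm_matrix_mult_le norm_matrix_mult3_le order_trans)

lemma norm_id_minus_mult_le:
  "norm (mat 1 - (P::real^'n^'m) ** (Q::real^'m^'n)) \<le> norm (mat 1 :: real^'m^'m) + norm P * norm Q"
  by (meson add_left_mono norm_matrix_mult_le norm_triangle_ineq4 order_trans)

section \<open>The Moore--Penrose pseudoinverse\<close>

definition penrose :: "real^'n^'m \<Rightarrow> real^'m^'n \<Rightarrow> bool" where
  "penrose A X \<longleftrightarrow> A ** X ** A = A \<and> X ** A ** X = X \<and>
                    transpose (A ** X) = A ** X \<and> transpose (X ** A) = X ** A"

lemma penrose_unique:
  assumes "penrose A X" "penrose A Y" shows "X = Y"
proof -
  have X: "A ** X ** A = A" "X ** A ** X = X"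
      "transpose (A ** X) = A ** X" "transpose (X ** A) = X ** A"
    and Y: "A ** Y ** A = A" "Y ** A ** Y = Y"
      "transpose (A ** Y) = A ** Y" "transpose (Y ** A) = Y ** A"
    using assms unfolding penrose_def by auto
  have AX: "A ** X = A ** Y"
  proof -
    have "A ** X = transpose (A ** Y) ** transpose (A ** X)"
      using X Y by (metis matrix_mul_assoc)
    also have "\<dots> = transpose (A ** X ** A ** Y)" by (simp add: matrix_transpose_mul matrix_mul_assoc)
    finally show ?thesis using X Y by (simp add: matrix_mul_assoc)
  qed
  have XA: "X ** A = Y ** A"
  proof -
    have "X ** A = transpose (X ** A) ** transpose (Y ** A)"
      using X Y by (metis matrix_mul_assoc)
    also have "\<dots> = transpose (Y ** A ** X ** A)" by (simp add: matrix_transpose_mul matrix_mul_assoc)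
    finally show ?thesis using X Y by (metis matrix_mul_assoc)
  qed
  have "X = X ** A ** X" using X by simp
  also have "\<dots> = Y ** A ** Y" using AX XA by (metis matrix_mul_assoc)
  finally show ?thesis using Y by simp
qed

lemma matrix_symmetric_if_self_adjoint:
  assumes "\<And>x y. x \<bullet> ((M::real^'n^'n) *v y) = (M *v x) \<bullet> y"
  shows "transpose M = M"
proof -
  have "M $ j $ i = M $ i $ j" for i j
    using assms[of "axis i 1" "axis j 1"]
    by (simp add: matrix_vector_mult_basis column_def inner_commute[of "axis i 1"]
        cart_eq_inner_axis[symmetric])
  then show ?thesis by (simp add: transpose_def vec_eq_iff)
qed

lemma subspace_range_matrix_vector_mult: "subspace (range ((*v) (M::real^'n^'m)))"
  by (rule linear_subspace_image[OF matrix_vector_mul_linear subspace_UNIV])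

lemma orthogonal_range_transpose_kernel:
  "(M::real^'n^'m) *v z = 0 \<Longrightarrow> z \<bullet> (transpose M *v w) = 0"
  by (metis dot_lmul_matrix inner_commute inner_zero_right transpose_matrix_vector)

lemma range_transpose_kernel_decomp:
  fixes M :: "real^'n^'m"
  obtains v z where "v \<in> range ((*v) (transpose M))" "M *v z = 0" "x = v + z"
proof -
  let ?V = "range ((*v) (transpose M))"
  obtain v z where v: "v \<in> span ?V" and z: "\<And>w. w \<in> span ?V \<Longrightarrow> orthogonal z w"
    and x: "x = v + z"
    using orthogonal_subspace_decomp_exists[of ?V x] by blast
  have "transpose M *v (M *v z) \<in> span ?V" by (simp add: span_base)
  then have "(M *v z) \<bullet> (M *v z) = 0"
    using z by (metis dot_lmul_matrix inner_commute orthogonal_def transpose_matrix_vector)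
  moreover have "v \<in> ?V" using v by (metis span_eq_iff subspace_range_matrix_vector_mult)
  ultimately show ?thesis using x that by simp
qed

lemma symmetric_if_projects_along_kernel:
  fixes M :: "real^'n^'n" and N :: "real^'n^'m"
  assumes proj: "\<And>v z. v \<in> range ((*v) (transpose N)) \<Longrightarrow> N *v z = 0 \<Longrightarrow> M *v (v + z) = v"
  shows "transpose M = M"
proof (rule matrix_symmetric_if_self_adjoint)
  fix x y
  obtain v z where v: "v \<in> range ((*v) (transpose N))" and z: "N *v z = 0" and x: "x = v + z"
    by (rule range_transpose_kernel_decomp)
  obtain v' z' where v': "v' \<in> range ((*v) (transpose N))" and z': "N *v z' = 0"
    and y: "y = v' + z'"
    by (rule range_transpose_kernel_decomp)
  have "z \<bullet> v' = 0" "v \<bullet> z' = 0"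
    using v v' orthogonal_range_transpose_kernel[OF z] orthogonal_range_transpose_kernel[OF z']
    by (auto simp: inner_commute)
  then show "x \<bullet> (M *v y) = (M *v x) \<bullet> y"
    using proj[OF v z] proj[OF v' z'] x y by (simp add: inner_add_left inner_add_right)
qed

lemma penrose_exists: "\<exists>X. penrose (A::real^'n^'m) X"
proof -
  let ?V = "range ((*v) (transpose A))"
  let ?T = "\<lambda>v. transpose A *v (A *v v)"
  have linT: "linear ?T" by (simp add: matrix_vector_mul_assoc)
  have "inj_on ?T ?V"
  proof (rule linear_inj_on_iff_eq_0[THEN iffD2, OF linT subspace_range_matrix_vector_mult],
      intro ballI impI)
    fix v assume "v \<in> ?V" "?T v = 0"
    then obtain w where w: "v = transpose A *v w" by blast
    have "(A *v v) \<bullet> (A *v v) = v \<bullet> ?T v"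
      by (metis dot_lmul_matrix inner_commute transpose_matrix_vector)
    then have "A *v v = 0" using \<open>?T v = 0\<close> by simp
    then show "v = 0" using orthogonal_range_transpose_kernel[of A v w] w by simp
  qed
  then obtain t where t: "t ` UNIV \<subseteq> ?V" "linear t" "\<forall>v\<in>?V. t (?T v) = v"
    using linear_exists_left_inverse_on[OF linT subspace_range_matrix_vector_mult] by blast
  define X where "X = matrix (\<lambda>y. t (transpose A *v y))"
  have "linear (\<lambda>y. t (transpose A *v y))"
    using linear_compose[OF matrix_vector_mul_linear t(2)] by (simp add: o_def)
  then have X: "X *v y = t (transpose A *v y)" for y
    unfolding X_def by (simp add: matrix_works linear_matrix_vector_mul_eq)
  have XA: "(X ** A) *v (v + z) = v" if "v \<in> ?V" "A *v z = 0" for v z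
    using t(3)[rule_format, OF that(1)] that(2)
    by (simp add: X matrix_vector_mul_assoc[symmetric] matrix_vector_right_distrib)
  have AX: "(A ** X) *v (u + w) = u" if u: "u \<in> range ((*v) A)" and w: "transpose A *v w = 0"
    for u w
  proof -
    obtain u0 where u: "u = A *v u0" using u by blast
    obtain v z where v: "v \<in> ?V" and z: "A *v z = 0" and u0: "u0 = v + z"
      by (rule range_transpose_kernel_decomp)
    have "transpose A *v (u + w) = ?T v"
      using w z by (simp add: u u0 matrix_vector_right_distrib)
    then have "X *v (u + w) = v" using t(3)[rule_format, OF v] by (simp add: X)
    then have "(A ** X) *v (u + w) = A *v v" by (simp add: matrix_vector_mul_assoc[symmetric])
    then show ?thesis by (simp add: u u0 z matrix_vector_right_distrib)
  qed
  have "A ** X ** A = A"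
  proof (subst matrix_eq, intro allI)
    fix x
    obtain v z where v: "v \<in> ?V" and z: "A *v z = 0" and x: "x = v + z"
      by (rule range_transpose_kernel_decomp)
    show "(A ** X ** A) *v x = A *v x"
      using XA[OF v z] z
      by (simp add: x matrix_vector_mul_assoc[symmetric] matrix_vector_right_distrib)
  qed
  moreover have "X ** A ** X = X"
  proof (subst matrix_eq, intro allI)
    fix y
    have "X *v y \<in> ?V" using t(1) by (auto simp: X)
    then show "(X ** A ** X) *v y = X *v y"
      using XA[of "X *v y" 0] by (simp add: matrix_vector_mul_assoc[symmetric])
  qed
  moreover have "transpose (A ** X) = A ** X"
    by (rule symmetric_if_projects_along_kernel[where N = "transpose A"]) (simp add: AX)
  moreover have "transpose (X ** A) = X ** A"
    by (rule symmetric_if_projects_along_kernel[where N = A]) (simp add: XA)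
  ultimately show ?thesis unfolding penrose_def by blast
qed

lemma penrose_pinv: "penrose A (pinv A)"
  using penrose_exists[of A] penrose_unique theI'[of "penrose A"]
  unfolding pinv_def penrose_def[symmetric] by blast

lemma mult_pinv_mult_self [simp]: "A ** pinv A ** A = A"
  and pinv_mult_mult_pinv [simp]: "pinv A ** A ** pinv A = pinv A"
  and transpose_mult_pinv: "transpose (A ** pinv A) = A ** pinv A"
  and transpose_pinv_mult: "transpose (pinv A ** A) = pinv A ** A"
  using penrose_pinv[of A] unfolding penrose_def by auto

lemma rank_mult_pinv: "rank (A ** pinv A) = rank A"
  by (metis le_antisym mult_pinv_mult_self rank_mul_le_left)

lemma rank_pinv_mult: "rank (pinv A ** A) = rank A"
  by (metis le_antisym mult_pinv_mult_self rank_mul_le_right matrix_mul_assoc)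

lemma idempotent_mult_pinv: "A ** pinv A ** (A ** pinv A) = A ** pinv A"
  by (metis matrix_mul_assoc mult_pinv_mult_self)

lemma idempotent_pinv_mult: "pinv A ** A ** (pinv A ** A) = pinv A ** A"
  by (metis matrix_mul_assoc pinv_mult_mult_pinv)

lemma rank_le_if_close_to_idempotent:
  fixes P Q :: "real^'n^'n"
  assumes P: "P ** P = P" and PQ: "norm (P - Q) < 1"
  shows "rank P \<le> rank Q"
proof -
  let ?R = "range ((*v) P)"
  have "inj_on ((*v) Q) (span ?R)"
    unfolding span_eq_iff[THEN iffD2, OF subspace_range_matrix_vector_mult]
  proof (rule linear_inj_on_iff_eq_0[THEN iffD2, OF matrix_vector_mul_linear
        subspace_range_matrix_vector_mult], intro ballI impI)
    fix v assume v: "v \<in> ?R" "Q *v v = 0"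
    then have "P *v v = v" using P by (auto simp: matrix_vector_mul_assoc)
    then have "norm v \<le> norm (P - Q) * norm v"
      using v(2) norm_matrix_vector_mult_le[of "P - Q" v]
      by (simp add: matrix_vector_mult_diff_rdistrib)
    then have "(1 - norm (P - Q)) * norm v \<le> 0" by (simp add: algebra_simps)
    then show "v = 0" using PQ by (simp add: mult_le_0_iff)
  qed
  then have "dim ?R = dim ((*v) Q ` ?R)"
    by (rule dim_image_eq[OF matrix_vector_mul_linear, symmetric])
  also have "\<dots> \<le> dim (range ((*v) Q))" by (rule dim_subset) auto
  finally show ?thesis by (simp add: rank_dim_range)
qed

lemma rank_eq_if_close_idempotents:
  fixes P Q :: "real^'n^'n"
  assumes "P ** P = P" "Q ** Q = Q" "norm (P - Q) < 1"
  shows "rank P = rank Q"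
  using rank_le_if_close_to_idempotent[OF assms(1,3)]
    rank_le_if_close_to_idempotent[OF assms(2), of P] assms(3)
  by (simp add: norm_minus_commute)

lemma eventually_rank_eq_if_tendsto_idempotent:
  fixes P :: "'a \<Rightarrow> real^'n^'n"
  assumes "(P \<longlongrightarrow> P0) F" "\<And>x. P x ** P x = P x" "P0 ** P0 = P0"
  shows "eventually (\<lambda>x. rank (P x) = rank P0) F"
  using tendstoD[OF assms(1) zero_less_one]
  by eventually_elim (simp add: dist_norm rank_eq_if_close_idempotents assms(2,3))

lemma norm_symmetric_idempotent_le:
  fixes P :: "real^'n^'n"
  assumes sym: "transpose P = P" and idem: "P ** P = P"
  shows "norm P \<le> sqrt CARD('n)"
proof -
  have diag: "P $ k $ k = (\<Sum>l\<in>UNIV. (P $ k $ l) ^ 2)" for k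
  proof -
    have "P $ k $ k = (P ** P) $ k $ k" using idem by simp
    also have "\<dots> = (\<Sum>l\<in>UNIV. P $ k $ l * P $ l $ k)" by (simp add: matrix_matrix_mult_def)
    also have "\<dots> = (\<Sum>l\<in>UNIV. (P $ k $ l) ^ 2)"
      using sym by (simp add: transpose_def vec_eq_iff power2_eq_square)
    finally show ?thesis .
  qed
  have "P $ k $ k \<le> 1" for k
  proof -
    have "(P $ k $ k) ^ 2 \<le> P $ k $ k"
      using member_le_sum[of k UNIV "\<lambda>l. (P $ k $ l) ^ 2"] diag[of k] by simp
    moreover have "P $ k $ k < (P $ k $ k) ^ 2" if "1 < P $ k $ k"
      using mult_strict_left_mono[of 1 "P $ k $ k" "P $ k $ k"] that by (simp add: power2_eq_square)
    ultimately show ?thesis by fastforce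
  qed
  then have "(\<Sum>k\<in>UNIV. P $ k $ k) \<le> CARD('n)"
    using sum_mono[of UNIV "\<lambda>k. P $ k $ k" "\<lambda>_. 1"] by simp
  then have "norm P ^ 2 \<le> CARD('n)"
    by (simp only: norm_matrix_power2_entries diag[symmetric])
  then show ?thesis by (simp add: real_le_rsqrt)
qed

lemma compact_symmetric_idempotents:
  "compact {P :: real^'n^'n. transpose P = P \<and> P ** P = P}"
  unfolding compact_eq_bounded_closed
proof
  show "bounded {P :: real^'n^'n. transpose P = P \<and> P ** P = P}"
    by (rule boundedI[where B = "sqrt CARD('n)"]) (auto intro: norm_symmetric_idempotent_le)
  show "closed {P :: real^'n^'n. transpose P = P \<and> P ** P = P}"
    by (intro closed_Collect_conj closed_Collect_eq continuous_intros
        linear_continuous_on[OF linear_transpose[unfolded linear_conv_bounded_linear]]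
        matrix_mult.continuous_on)
qed

lemma eq_mult_pinv_mult_if_rank_eq:
  fixes P :: "real^'m^'m" and A :: "real^'n^'m"
  assumes PA: "P ** A = A" and rank: "rank P = rank A"
  shows "P = A ** pinv A ** P"
proof -
  have "range ((*v) A) \<subseteq> range ((*v) P)"
    by (metis PA image_subsetI matrix_vector_mul_assoc rangeI)
  then have range: "range ((*v) A) = range ((*v) P)"
    using rank by (intro subspace_dim_equal subspace_range_matrix_vector_mult)
      (simp_all add: rank_dim_range[symmetric])
  show ?thesis
  proof (subst matrix_eq, intro allI)
    fix y
    obtain w where w: "P *v y = A *v w" using range by (metis rangeE rangeI)
    have "(A ** pinv A ** P) *v y = (A ** pinv A) *v (A *v w)"
      by (simp add: w flip: matrix_vector_mul_assoc)
    also have "\<dots> = A *v w" by (simp add: matrix_vector_mul_assoc)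
    finally show "P *v y = (A ** pinv A ** P) *v y" using w by simp
  qed
qed

section \<open>Boundedness on a rank stratum\<close>

lemma eq_0_if_between_range_projections:
  fixes A :: "real^'n^'m" and C :: "real^'m^'n"
  assumes ACA: "A ** C ** A = 0" and QCP: "Q ** C ** P = C"
    and PA: "P ** A = A" and AQ: "A ** Q = A" and Q: "transpose Q = Q"
    and rank: "rank P = rank A" "rank Q = rank A"
  shows "C = 0"
proof -
  have P_eq: "P = A ** (pinv A ** P)"
    using eq_mult_pinv_mult_if_rank_eq[OF PA rank(1)] by (simp add: matrix_mul_assoc)
  have "Q ** transpose A = transpose A"
    using arg_cong[OF AQ, of transpose] Q by (simp add: matrix_transpose_mul)
  then have "Q = transpose A ** pinv (transpose A) ** Q"
    using rank(2) by (intro eq_mult_pinv_mult_if_rank_eq) (simp_all add: rank_transpose)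
  then have "transpose Q = transpose (transpose A ** pinv (transpose A) ** Q)" by simp
  then have Q_eq: "Q = (Q ** transpose (pinv (transpose A))) ** A"
    using Q by (simp add: matrix_transpose_mul matrix_mul_assoc)
  have "C = (Q ** transpose (pinv (transpose A))) ** (A ** C ** A) ** (pinv A ** P)"
    using QCP by (subst (asm) P_eq, subst (asm) Q_eq) (simp add: matrix_mul_assoc)
  then show ?thesis by (simp add: ACA)
qed

lemma scaled_pinv_limit_eq_0:
  fixes B :: "nat \<Rightarrow> real^'n^'m" and s :: "nat \<Rightarrow> real"
  assumes B: "B \<longlonglongrightarrow> A" and rank: "\<And>k. rank (B k) = rank A"
    and s: "s \<longlonglongrightarrow> 0" and C: "(\<lambda>k. s k *\<^sub>R pinv (B k)) \<longlonglongrightarrow> C"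
  shows "C = 0"
proof -
  let ?S = "\<lambda>k. (B k ** pinv (B k), pinv (B k) ** B k)"
  let ?Proj = "{P :: real^'m^'m. transpose P = P \<and> P ** P = P} \<times>
    {Q :: real^'n^'n. transpose Q = Q \<and> Q ** Q = Q}"
  have "compact ?Proj" by (intro compact_Times compact_symmetric_idempotents)
  moreover have "\<forall>k. ?S k \<in> ?Proj"
    by (simp add: transpose_mult_pinv transpose_pinv_mult idempotent_mult_pinv idempotent_pinv_mult)
  ultimately obtain P Q r where PQ: "P ** P = P" "transpose Q = Q" "Q ** Q = Q"
    and r: "strict_mono r" and lim: "(?S \<circ> r) \<longlonglongrightarrow> (P, Q)"
    by (auto elim!: seq_compactE[OF compact_imp_seq_compact])
  let ?B = "\<lambda>k. B (r k)" and ?X = "\<lambda>k. pinv (B (r k))"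
  have tP: "(\<lambda>k. ?B k ** ?X k) \<longlonglongrightarrow> P" and tQ: "(\<lambda>k. ?X k ** ?B k) \<longlonglongrightarrow> Q"
    using tendsto_fst[OF lim] tendsto_snd[OF lim] by (simp_all add: o_def)
  have tB: "?B \<longlonglongrightarrow> A" using LIMSEQ_subseq_LIMSEQ[OF B r] by (simp add: o_def)
  have tC: "(\<lambda>k. s (r k) *\<^sub>R ?X k) \<longlonglongrightarrow> C"
    using LIMSEQ_subseq_LIMSEQ[OF C r] by (simp add: o_def)
  have ts: "(\<lambda>k. s (r k)) \<longlonglongrightarrow> 0" using LIMSEQ_subseq_LIMSEQ[OF s r] by (simp add: o_def)
  have "(\<lambda>k. ?B k ** (s (r k) *\<^sub>R ?X k) ** ?B k) \<longlonglongrightarrow> A ** C ** A"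
    by (intro matrix_mult.tendsto tB tC)
  moreover have "(\<lambda>k. ?B k ** (s (r k) *\<^sub>R ?X k) ** ?B k) \<longlonglongrightarrow> 0"
    using tendsto_scaleR[OF ts tB] by (simp add: matrix_mult.scaleR_left matrix_mult.scaleR_right)
  ultimately have ACA: "A ** C ** A = 0" by (rule LIMSEQ_unique)
  have "(\<lambda>k. (?X k ** ?B k) ** (s (r k) *\<^sub>R ?X k) ** (?B k ** ?X k)) \<longlonglongrightarrow> Q ** C ** P"
    by (intro matrix_mult.tendsto tQ tC tP)
  then have QCP: "Q ** C ** P = C"
    using tC
    by (simp add: matrix_mult.scaleR_left matrix_mult.scaleR_right matrix_mul_assoc LIMSEQ_unique)
  have "(\<lambda>k. (?B k ** ?X k) ** ?B k) \<longlonglongrightarrow> P ** A" by (intro matrix_mult.tendsto tP tB)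
  then have PA: "P ** A = A" using tB by (simp add: LIMSEQ_unique)
  have "(\<lambda>k. ?B k ** (?X k ** ?B k)) \<longlonglongrightarrow> A ** Q" by (intro matrix_mult.tendsto tB tQ)
  then have AQ: "A ** Q = A" using tB by (simp add: matrix_mul_assoc LIMSEQ_unique)
  have "eventually (\<lambda>k. rank P = rank A \<and> rank Q = rank A) sequentially"
    using eventually_rank_eq_if_tendsto_idempotent[OF tP idempotent_mult_pinv PQ(1)]
      eventually_rank_eq_if_tendsto_idempotent[OF tQ idempotent_pinv_mult PQ(3)]
    by eventually_elim (simp add: rank_mult_pinv rank_pinv_mult rank)
  then have "rank P = rank A" "rank Q = rank A" by (auto dest: eventually_happens)
  then show ?thesis using eq_0_if_between_range_projections[OF ACA QCP PA AQ PQ(2)] by simp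
qed

definition rank_ball :: "real^'n^'m \<Rightarrow> real \<Rightarrow> (real^'n^'m) set" where
  "rank_ball A \<delta> = {B \<in> ball A \<delta>. rank B = rank A}"

lemma bounded_pinv_rank_ball: "\<exists>\<delta>>0. bounded (pinv ` rank_ball (A::real^'n^'m) \<delta>)"
proof (rule ccontr)
  assume "\<not> ?thesis"
  then have "\<not> bounded (pinv ` rank_ball A (1 / Suc k))" for k :: nat by auto
  then have "\<exists>B \<in> rank_ball A (1 / Suc k). \<not> norm (pinv B) \<le> Suc k" for k :: nat
    unfolding bounded_iff by blast
  then obtain B where B: "\<And>k. B k \<in> rank_ball A (1 / Suc k)" "\<And>k. Suc k < norm (pinv (B k))"
    unfolding not_le by metis
  have pos: "0 < norm (pinv (B k))" for k
    using B(2)[of k] of_nat_0_less_iff[of "Suc k"] by linarith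
  define s where "s k = 1 / norm (pinv (B k))" for k
  have "(\<lambda>k. B k - A) \<longlonglongrightarrow> 0"
    using B(1) by (intro LIMSEQ_norm_0) (simp add: rank_ball_def dist_norm norm_minus_commute)
  then have tB: "B \<longlonglongrightarrow> A" by (rule LIM_zero_cancel)
  have ts: "s \<longlonglongrightarrow> 0"
    using B(2) pos by (intro LIMSEQ_norm_0) (simp add: s_def frac_less2 del: of_nat_Suc)
  have "\<forall>k. s k *\<^sub>R pinv (B k) \<in> sphere 0 1"
    using pos by (simp add: s_def)
  then obtain C r where C: "C \<in> sphere 0 1" and r: "strict_mono r"
    and lim: "((\<lambda>k. s k *\<^sub>R pinv (B k)) \<circ> r) \<longlonglongrightarrow> C"
    by (rule seq_compactE[OF compact_imp_seq_compact[OF compact_sphere]])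
  have "C = 0"
    using LIMSEQ_subseq_LIMSEQ[OF tB r] LIMSEQ_subseq_LIMSEQ[OF ts r] lim B(1)
    by (intro scaled_pinv_limit_eq_0[of "B \<circ> r" A "s \<circ> r"]) (auto simp: rank_ball_def o_def)
  then show False using C by simp
qed

section \<open>Wedin's formula\<close>

text \<open>Wedin's decomposition of \<open>B\<^sup>+ - A\<^sup>+\<close>, with \<open>X, Y\<close> standing for \<open>B\<^sup>+, A\<^sup>+\<close> and \<open>E\<close>
  for \<open>B - A\<close>.\<close>
definition wedin ::
  "real^'n^'m \<Rightarrow> real^'m^'n \<Rightarrow> real^'n^'m \<Rightarrow> real^'m^'n \<Rightarrow> real^'n^'m \<Rightarrow> real^'m^'n"
  where "wedin B X A Y E = - (X ** E ** Y) + X ** transpose X ** transpose E ** (mat 1 - A ** Y)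
    + (mat 1 - X ** B) ** transpose E ** transpose Y ** Y"

lemmas matrix_mult_distribs = matrix_mult.add_left matrix_mult.add_right matrix_mult.diff_left
  matrix_mult.diff_right matrix_mult.minus_left matrix_mult.minus_right
  transpose_add transpose_diff transpose_minus matrix_transpose_mul

lemma pinv_diff_eq_wedin: "pinv B - pinv A = wedin B (pinv B) A (pinv A) (B - A)"
proof -
  let ?X = "pinv B" and ?Y = "pinv A"
  have X: "?X = ?X ** transpose ?X ** transpose B"
    by (metis pinv_mult_mult_pinv transpose_mult_pinv matrix_transpose_mul matrix_mul_assoc)
  have "transpose A ** (A ** ?Y) = transpose A"
    by (metis mult_pinv_mult_self transpose_mult_pinv matrix_transpose_mul matrix_mul_assoc)
  then have "transpose B ** (mat 1 - A ** ?Y) = transpose (B - A) ** (mat 1 - A ** ?Y)"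
    by (simp add: matrix_mult_distribs)
  then have term2:
    "?X ** (mat 1 - A ** ?Y) = ?X ** transpose ?X ** transpose (B - A) ** (mat 1 - A ** ?Y)"
    by (subst X) (simp add: matrix_mul_assoc[symmetric])
  have Y: "?Y = transpose A ** transpose ?Y ** ?Y"
    by (metis pinv_mult_mult_pinv transpose_pinv_mult matrix_transpose_mul matrix_mul_assoc)
  have "?X ** B ** transpose B = transpose B"
    by (metis mult_pinv_mult_self transpose_pinv_mult matrix_transpose_mul matrix_mul_assoc)
  then have "(mat 1 - ?X ** B) ** transpose A = - ((mat 1 - ?X ** B) ** transpose (B - A))"
    by (simp add: matrix_mult_distribs)
  then have term3:
    "(mat 1 - ?X ** B) ** ?Y = - ((mat 1 - ?X ** B) ** transpose (B - A) ** transpose ?Y ** ?Y)"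
    by (subst Y) (simp add: matrix_mult.minus_left matrix_mul_assoc)
  have "?X - ?Y = - (?X ** (B - A) ** ?Y) + ?X ** (mat 1 - A ** ?Y) - (mat 1 - ?X ** B) ** ?Y"
    by (simp add: matrix_mult_distribs matrix_mul_assoc)
  then show ?thesis unfolding wedin_def term2 term3 by simp
qed

lemma bounded_linear_wedin: "bounded_linear (wedin B X A Y)"
  unfolding linear_conv_bounded_linear[symmetric]
  by (rule linearI) (simp_all add: wedin_def matrix_mult_distribs transpose_scalar
      matrix_mult.scaleR_left matrix_mult.scaleR_right algebra_simps)

lemma tendsto_wedin [tendsto_intros]:
  assumes "(B \<longlongrightarrow> b) F" "(X \<longlongrightarrow> xx) F" "(A \<longlongrightarrow> a) F" "(Y \<longlongrightarrow> y) F" "(E \<longlongrightarrow> e) F"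
  shows "((\<lambda>t. wedin (B t) (X t) (A t) (Y t) (E t)) \<longlongrightarrow> wedin b xx a y e) F"
  unfolding wedin_def
  by (intro tendsto_add tendsto_minus matrix_mult.tendsto tendsto_transpose tendsto_diff
      tendsto_const assms)

lemma norm_wedin_le:
  "norm (wedin B X A Y E) \<le>
    (norm X * norm Y + norm X ^ 2 * norm (mat 1 - A ** Y) + norm (mat 1 - X ** B) * norm Y ^ 2)
      * norm E"
proof -
  let ?P = "X ** E ** Y" and ?Q = "X ** transpose X ** transpose E ** (mat 1 - A ** Y)"
    and ?R = "(mat 1 - X ** B) ** transpose E ** transpose Y ** Y"
  have "norm ?P \<le> norm X * norm Y * norm E"
    using norm_matrix_mult3_le[of X E Y] by (simp add: mult_ac)
  moreover have "norm ?Q \<le> norm X ^ 2 * norm (mat 1 - A ** Y) * norm E"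
    using norm_matrix_mult4_le[of X "transpose X" "transpose E" "mat 1 - A ** Y"]
    by (simp add: norm_transpose power2_eq_square mult_ac)
  moreover have "norm ?R \<le> norm (mat 1 - X ** B) * norm Y ^ 2 * norm E"
    using norm_matrix_mult4_le[of "mat 1 - X ** B" "transpose E" "transpose Y" Y]
    by (simp add: norm_transpose power2_eq_square mult_ac)
  moreover have "norm (- ?P + ?Q + ?R) \<le> norm ?P + norm ?Q + norm ?R"
    using norm_triangle_ineq[of "- ?P + ?Q" ?R] norm_triangle_ineq[of "- ?P" ?Q] by simp
  ultimately show ?thesis unfolding wedin_def distrib_right by linarith
qed

lemma lipschitz_pinv_rank_ball: "\<exists>\<delta>>0. \<exists>K. K-lipschitz_on (rank_ball (A::real^'n^'m) \<delta>) pinv"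
proof -
  obtain \<delta> M where \<delta>: "\<delta> > 0" and M: "\<And>B. B \<in> rank_ball A \<delta> \<Longrightarrow> norm (pinv B) \<le> M"
    using bounded_pinv_rank_ball[of A] unfolding bounded_iff by blast
  have "A \<in> rank_ball A \<delta>" using \<delta> by (simp add: rank_ball_def)
  then have "0 \<le> M" using M norm_ge_zero order_trans by blast
  define a where "a = norm A + \<delta>"
  have "0 \<le> a" using \<delta> by (simp add: a_def)
  have a: "norm B \<le> a" if "B \<in> rank_ball A \<delta>" for B
    using that norm_triangle_ineq2[of B A]
    by (simp add: rank_ball_def a_def dist_norm norm_minus_commute)
  define K where "K = M * M + M\<^sup>2 * (norm (mat 1 :: real^'m^'m) + a * M)
    + (norm (mat 1 :: real^'n^'n) + M * a) * M\<^sup>2"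
  have "K-lipschitz_on (rank_ball A \<delta>) pinv"
  proof (rule lipschitz_onI)
    show "0 \<le> K" using \<open>0 \<le> M\<close> \<delta> by (simp add: K_def a_def)
    fix B1 B2 assume B1: "B1 \<in> rank_ball A \<delta>" and B2: "B2 \<in> rank_ball A \<delta>"
    have "dist (pinv B1) (pinv B2) = norm (wedin B1 (pinv B1) B2 (pinv B2) (B1 - B2))"
      by (simp add: dist_norm pinv_diff_eq_wedin)
    also have "\<dots> \<le> (norm (pinv B1) * norm (pinv B2)
        + norm (pinv B1) ^ 2 * norm (mat 1 - B2 ** pinv B2)
        + norm (mat 1 - pinv B1 ** B1) * norm (pinv B2) ^ 2) * norm (B1 - B2)"
      by (rule norm_wedin_le)
    also have "\<dots> \<le> K * dist B1 B2"
    proof -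
      have X1: "norm (pinv B1) \<le> M" and X2: "norm (pinv B2) \<le> M" using M B1 B2 by auto
      have "norm (mat 1 - B2 ** pinv B2) \<le> norm (mat 1 :: real^'m^'m) + a * M"
        using norm_id_minus_mult_le[of B2 "pinv B2"] mult_mono[OF a[OF B2] X2] \<open>0 \<le> a\<close>
        by simp
      moreover have "norm (mat 1 - pinv B1 ** B1) \<le> norm (mat 1 :: real^'n^'n) + M * a"
        using norm_id_minus_mult_le[of "pinv B1" B1] mult_mono[OF X1 a[OF B1]] \<open>0 \<le> M\<close>
        by simp
      moreover have "norm (pinv B1) * norm (pinv B2) \<le> M * M"
        using X1 X2 \<open>0 \<le> M\<close> by (intro mult_mono) auto
      moreover have "norm (pinv B1) ^ 2 \<le> M ^ 2" "norm (pinv B2) ^ 2 \<le> M ^ 2"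
        using X1 X2 by (auto intro: power_mono)
      ultimately show ?thesis
        unfolding K_def dist_norm using \<open>0 \<le> M\<close> \<open>0 \<le> a\<close>
        by (intro mult_right_mono add_mono mult_mono) auto
    qed
    finally show "dist (pinv B1) (pinv B2) \<le> K * dist B1 B2" .
  qed
  then show ?thesis using \<delta> by blast
qed

lemma rank_ball_neighbourhood:
  fixes A :: "'a::metric_space \<Rightarrow> real^'n^'m"
  assumes A: "isCont A x0" and rank: "eventually (\<lambda>x. rank (A x) = rank (A x0)) (at x0)"
    and "\<delta> > 0"
  obtains r where "r > 0" "A ` ball x0 r \<subseteq> rank_ball (A x0) \<delta>"
proof -
  have "eventually (\<lambda>x. A x \<in> rank_ball (A x0) \<delta>) (at x0)"
    using tendstoD[OF isContD[OF A] \<open>\<delta> > 0\<close>] rank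
    by eventually_elim (simp add: rank_ball_def dist_commute)
  then obtain r where
    "r > 0" "\<And>x. x \<noteq> x0 \<Longrightarrow> dist x x0 < r \<Longrightarrow> A x \<in> rank_ball (A x0) \<delta>"
    unfolding eventually_at by blast
  moreover have "A x0 \<in> rank_ball (A x0) \<delta>" using \<open>\<delta> > 0\<close> by (simp add: rank_ball_def)
  ultimately show ?thesis using that by (fastforce simp: dist_commute)
qed

lemma isCont_pinv:
  fixes A :: "'a::metric_space \<Rightarrow> real^'n^'m"
  assumes A: "isCont A x0" and rank: "eventually (\<lambda>x. rank (A x) = rank (A x0)) (at x0)"
  shows "isCont (\<lambda>x. pinv (A x)) x0"
proof -
  obtain \<delta> K where "\<delta> > 0" and K: "K-lipschitz_on (rank_ball (A x0) \<delta>) pinv"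
    using lipschitz_pinv_rank_ball by blast
  then obtain r where "r > 0" and r: "A ` ball x0 r \<subseteq> rank_ball (A x0) \<delta>"
    using rank_ball_neighbourhood[OF A rank] by blast
  have "eventually (\<lambda>x. A x \<in> rank_ball (A x0) \<delta>) (at x0)"
    using eventually_at_in_open'[of "ball x0 r" x0] \<open>r > 0\<close> r by (auto elim!: eventually_mono)
  then show ?thesis
    unfolding isCont_def using r \<open>r > 0\<close>
    by (intro continuous_on_tendsto_compose[OF lipschitz_on_continuous_on[OF K] isContD[OF A]])
      auto
qed

lemma rank_eventually_eq_if_isCont_pinv:
  fixes A :: "'a::t2_space \<Rightarrow> real^'n^'m"
  assumes A: "isCont A x0" and pinv: "isCont (\<lambda>x. pinv (A x)) x0"
  shows "eventually (\<lambda>x. rank (A x) = rank (A x0)) (at x0)"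
proof -
  have "((\<lambda>x. A x ** pinv (A x)) \<longlongrightarrow> A x0 ** pinv (A x0)) (at x0)"
    using matrix_mult.tendsto[OF isContD[OF A] isContD[OF pinv]] .
  from eventually_rank_eq_if_tendsto_idempotent[OF this idempotent_mult_pinv idempotent_mult_pinv]
  show ?thesis by (simp add: rank_mult_pinv)
qed

lemma has_derivative_bounded_bilinear_vanishing:
  assumes b: "bounded_bilinear b" and e: "(e has_derivative e') (at x within s)" and e0: "e x = 0"
    and g: "(g \<longlongrightarrow> g x) (at x within s)"
  shows "((\<lambda>y. b (g y) (e y)) has_derivative (\<lambda>h. b (g x) (e' h))) (at x within s)"
proof -
  interpret b: bounded_bilinear b by fact
  obtain KE where KE: "\<And>h. norm (e' h) \<le> norm h * KE"
    using bounded_linear.bounded[OF has_derivative_bounded_linear[OF e]] by fast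
  obtain K where K: "0 < K" "\<And>a c. norm (b a c) \<le> norm a * norm c * K"
    using b.pos_bounded by fast
  define N where "N y = norm (e y - e' (y - x)) / norm (y - x)" for y
  have N: "(N \<longlongrightarrow> 0) (at x within s)"
    using e e0 unfolding has_derivative_iff_norm by (simp add: N_def[abs_def])
  have g0: "((\<lambda>y. norm (g y - g x)) \<longlongrightarrow> 0) (at x within s)"
    using tendsto_norm_zero[OF LIM_zero[OF g]] .
  show ?thesis
  proof (rule has_derivativeI_sandwich[of 1])
    show "bounded_linear (\<lambda>h. b (g x) (e' h))"
      by (rule bounded_linear_compose[OF b.bounded_linear_right has_derivative_bounded_linear[OF e]])
    have "((\<lambda>y. norm (g x) * N y * K + norm (g y - g x) * (KE + N y) * K) \<longlongrightarrow>
        norm (g x) * 0 * K + 0 * (KE + 0) * K) (at x within s)"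
      by (intro tendsto_intros N g0)
    then show "((\<lambda>y. norm (g x) * N y * K + norm (g y - g x) * (KE + N y) * K) \<longlongrightarrow> 0)
        (at x within s)"
      by simp
  next
    fix y assume "y \<noteq> x"
    let ?D = "e y - e' (y - x)"
    have "b (g y) (e y) - b (g x) (e x) - b (g x) (e' (y - x))
        = b (g x) ?D + b (g y - g x) (e y)"
      using e0 by (simp add: b.diff_left b.diff_right b.zero_right algebra_simps)
    also have "norm \<dots> \<le> norm (g x) * norm ?D * K + norm (g y - g x) * norm (e y) * K"
      by (rule order_trans[OF norm_triangle_ineq add_mono[OF K(2) K(2)]])
    also have "\<dots> \<le> norm (g x) * norm ?D * K
        + norm (g y - g x) * (norm (y - x) * KE + norm ?D) * K"
      using norm_triangle_ineq[of "e' (y - x)" ?D] KE[of "y - x"] K(1)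
      by (intro add_left_mono mult_right_mono mult_left_mono) auto
    finally show "norm (b (g y) (e y) - b (g x) (e x) - b (g x) (e' (y - x))) / norm (y - x)
        \<le> norm (g x) * N y * K + norm (g y - g x) * (KE + N y) * K"
      using \<open>y \<noteq> x\<close> by (simp add: N_def divide_right_mono field_simps)
  qed simp
qed

lemma pinv_has_derivative:
  fixes A :: "'a::real_normed_vector \<Rightarrow> real^'n^'m"
  assumes A: "(A has_derivative A') (at x)"
    and rank: "eventually (\<lambda>y. rank (A y) = rank (A x)) (at x)"
  shows "((\<lambda>y. pinv (A y)) has_derivative
           (\<lambda>h. wedin (A x) (pinv (A x)) (A x) (pinv (A x)) (A' h))) (at x)"
proof -
  define W where "W y = Blinfun (wedin (A y) (pinv (A y)) (A x) (pinv (A x)))" for y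
  have W: "blinfun_apply (W y) = wedin (A y) (pinv (A y)) (A x) (pinv (A x))" for y
    by (simp add: W_def bounded_linear_Blinfun_apply bounded_linear_wedin)
  have cA: "isCont A x" by (rule has_derivative_continuous[OF A])
  have "isCont W x"
    using isContD[OF cA] isContD[OF isCont_pinv[OF cA rank]]
    by (intro continuous_blinfun_componentwiseI1) (simp add: continuous_at W tendsto_wedin)
  then have "((\<lambda>y. W y (A y - A x)) has_derivative (\<lambda>h. W x (A' h))) (at x)"
    using has_derivative_diff[OF A has_derivative_const[of "A x"]]
    by (intro has_derivative_bounded_bilinear_vanishing[OF bounded_bilinear_blinfun_apply])
      (simp_all add: isContD)
  then have "((\<lambda>y. W y (A y - A x) + pinv (A x)) has_derivative (\<lambda>h. W x (A' h))) (at x)"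
    by (rule has_derivative_add_const)
  moreover have "W y (A y - A x) + pinv (A x) = pinv (A y)" for y
    unfolding W pinv_diff_eq_wedin[of "A y" "A x", symmetric] by simp
  ultimately show ?thesis by (simp add: W)
qed

section \<open>Regularity classes\<close>

lemma regular_at_imp_isCont:
  fixes f :: "'a::real_normed_vector \<Rightarrow> 'b::real_normed_vector"
  assumes "regular_at c f x0"
  shows "isCont f x0"
proof (cases c)
  case Reg0
  then show ?thesis using assms by simp
next
  case RegLp
  then obtain r L where "r > 0"
    and L: "\<forall>x\<in>cball x0 r. norm (f x - f x0) \<le> L * norm (x - x0)"
    using assms by (auto simp: ptwise_lipschitz_at_def)
  have "eventually (\<lambda>x. x \<in> ball x0 r) (at x0)"
    using \<open>r > 0\<close> by (intro eventually_at_in_open') auto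
  then have "eventually (\<lambda>x. norm (f x - f x0) \<le> L * norm (x - x0)) (at x0)"
    by eventually_elim (use L in auto)
  moreover have "((\<lambda>x. L * norm (x - x0)) \<longlongrightarrow> 0) (at x0)"
    by (intro tendsto_mult_right_zero tendsto_norm_zero) (simp add: LIM_zero_iff)
  ultimately have "((\<lambda>x. f x - f x0) \<longlongrightarrow> 0) (at x0)" by (rule Lim_null_comparison)
  then show ?thesis unfolding isCont_def by (rule LIM_zero_cancel)
next
  case RegL
  then obtain r L where "r > 0" and L: "L-lipschitz_on (ball x0 r) f"
    using assms by (auto simp: locally_lipschitz_at_def)
  have "continuous_on (ball x0 r) f" by (rule lipschitz_on_continuous_on[OF L])
  then show ?thesis using \<open>r > 0\<close> by (simp add: continuous_on_eq_continuous_at)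
next
  case Reg1p
  then show ?thesis using assms by (simp add: differentiable_imp_continuous_within)
next
  case Reg1
  then obtain r f' where "r > 0" "\<forall>x\<in>ball x0 r. (f has_derivative blinfun_apply (f' x)) (at x)"
    using assms by (auto simp: C1_at_def)
  then show ?thesis by (metis centre_in_ball has_derivative_continuous)
qed

lemma ptwise_lipschitz_at_compose:
  assumes f: "ptwise_lipschitz_at f x0" and g: "K-lipschitz_on S g"
    and S: "f ` ball x0 r \<subseteq> S" "r > 0"
  shows "ptwise_lipschitz_at (\<lambda>x. g (f x)) x0"
proof -
  obtain r' L where "r' > 0" "L \<ge> 0"
    and L: "\<forall>x\<in>cball x0 r'. norm (f x - f x0) \<le> L * norm (x - x0)"
    using f by (auto simp: ptwise_lipschitz_at_def)
  have bound: "norm (g (f x) - g (f x0)) \<le> (K * L) * norm (x - x0)"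
    if x: "x \<in> cball x0 (min r' (r / 2))" for x
  proof -
    have "f x \<in> S" "f x0 \<in> S" using x S by (auto simp: subset_iff)
    then have "norm (g (f x) - g (f x0)) \<le> K * norm (f x - f x0)"
      using lipschitz_onD[OF g] by (simp add: dist_norm)
    also have "\<dots> \<le> K * (L * norm (x - x0))"
      using L x lipschitz_on_nonneg[OF g] by (intro mult_left_mono) auto
    finally show ?thesis by (simp add: mult.assoc)
  qed
  moreover have "min r' (r / 2) > 0" "K * L \<ge> 0"
    using \<open>r' > 0\<close> \<open>r > 0\<close> \<open>L \<ge> 0\<close> lipschitz_on_nonneg[OF g] by auto
  ultimately show ?thesis unfolding ptwise_lipschitz_at_def by blast
qed

lemma locally_lipschitz_at_compose:
  assumes f: "locally_lipschitz_at f x0" and g: "K-lipschitz_on S g"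
    and S: "f ` ball x0 r \<subseteq> S" "r > 0"
  shows "locally_lipschitz_at (\<lambda>x. g (f x)) x0"
proof -
  obtain r' L where "r' > 0" and L: "L-lipschitz_on (ball x0 r') f"
    using f by (auto simp: locally_lipschitz_at_def)
  have "L-lipschitz_on (ball x0 (min r r')) f" by (rule lipschitz_on_subset[OF L]) auto
  moreover have "K-lipschitz_on (f ` ball x0 (min r r')) g"
    by (rule lipschitz_on_subset[OF g]) (use S in auto)
  ultimately have "(K * L)-lipschitz_on (ball x0 (min r r')) (\<lambda>x. g (f x))"
    by (rule lipschitz_on_compose2)
  then show ?thesis
    unfolding locally_lipschitz_at_def using \<open>r' > 0\<close> \<open>r > 0\<close> by (intro exI[of _ "min r r'"]) auto
qed

lemma C1_at_pinv:
  fixes A :: "'a::euclidean_space \<Rightarrow> real^'n^'m"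
  assumes "C1_at A x0" and rank: "eventually (\<lambda>x. rank (A x) = rank (A x0)) (at x0)"
  shows "C1_at (\<lambda>x. pinv (A x)) x0"
proof -
  obtain r A' where "r > 0"
    and A': "\<forall>x\<in>ball x0 r. (A has_derivative blinfun_apply (A' x)) (at x)"
    and cA': "isCont A' x0"
    using assms(1) unfolding C1_at_def by blast
  have cA: "isCont A x0" using regular_at_imp_isCont[of Reg1 A x0] assms(1) by simp
  obtain r1 where "r1 > 0" and r1: "A ` ball x0 r1 \<subseteq> rank_ball (A x0) 1"
    using rank_ball_neighbourhood[OF cA rank zero_less_one] by blast
  have rank_r1: "rank (A y) = rank (A x0)" if "y \<in> ball x0 r1" for y
    using r1 that unfolding rank_ball_def by blast
  define r' where "r' = min r r1"
  define P' where "P' x = Blinfun (\<lambda>h. wedin (A x) (pinv (A x)) (A x) (pinv (A x)) (A' x h))"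
    for x
  have P': "blinfun_apply (P' x) = (\<lambda>h. wedin (A x) (pinv (A x)) (A x) (pinv (A x)) (A' x h))"
    for x
    unfolding P'_def
    by (rule bounded_linear_Blinfun_apply[OF bounded_linear_compose[OF bounded_linear_wedin
          blinfun.bounded_linear_right]])
  have "((\<lambda>y. pinv (A y)) has_derivative P' x) (at x)" if x: "x \<in> ball x0 r'" for x
  proof -
    have "eventually (\<lambda>y. y \<in> ball x0 r') (at x)"
      using x by (intro eventually_at_in_open') auto
    then have "eventually (\<lambda>y. rank (A y) = rank (A x)) (at x)"
      by eventually_elim (use x rank_r1 in \<open>simp add: r'_def\<close>)
    then show ?thesis unfolding P' using A' x by (intro pinv_has_derivative) (auto simp: r'_def)
  qed
  moreover have "isCont P' x0"
  proof (rule continuous_blinfun_componentwiseI1)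
    fix h :: 'a
    have "((\<lambda>x. A' x h) \<longlongrightarrow> A' x0 h) (at x0)"
      using isContD[OF cA'] by (intro blinfun.tendsto) auto
    then show "isCont (\<lambda>x. P' x h) x0"
      unfolding continuous_at P' using isContD[OF cA] isContD[OF isCont_pinv[OF cA rank]]
      by (intro tendsto_wedin)
  qed
  moreover have "r' > 0" using \<open>r > 0\<close> \<open>r1 > 0\<close> by (simp add: r'_def)
  ultimately show ?thesis unfolding C1_at_def by blast
qed

lemma regular_at_pinv:
  fixes A :: "'a::euclidean_space \<Rightarrow> real^'n^'m"
  assumes A: "regular_at c A x0" and rank: "eventually (\<lambda>x. rank (A x) = rank (A x0)) (at x0)"
  shows "regular_at c (\<lambda>x. pinv (A x)) x0"
proof -
  have cA: "isCont A x0" using A by (rule regular_at_imp_isCont)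
  obtain \<delta> K where "\<delta> > 0" and K: "K-lipschitz_on (rank_ball (A x0) \<delta>) pinv"
    using lipschitz_pinv_rank_ball by blast
  then obtain r where "r > 0" and r: "A ` ball x0 r \<subseteq> rank_ball (A x0) \<delta>"
    using rank_ball_neighbourhood[OF cA rank] by blast
  show ?thesis
  proof (cases c)
    case Reg0
    then show ?thesis using isCont_pinv[OF cA rank] by simp
  next
    case RegLp
    then show ?thesis using A ptwise_lipschitz_at_compose[OF _ K r \<open>r > 0\<close>] by simp
  next
    case RegL
    then show ?thesis using A locally_lipschitz_at_compose[OF _ K r \<open>r > 0\<close>] by simp
  next
    case Reg1p
    then show ?thesis using A pinv_has_derivative[OF _ rank] by (auto simp: differentiable_def)
  next
    case Reg1
    then show ?thesis using A C1_at_pinv[OF _ rank] by simp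
  qed
qed

theorem lemma4:
  fixes A :: "real^'d \<Rightarrow> real^'n^'m" and x0 :: "real^'d" and c :: regclass
  assumes "regular_at c A x0"
  shows "regular_at c (\<lambda>x. pinv (A x)) x0 \<longleftrightarrow>
           ((\<lambda>x. real (rank (A x))) \<longlongrightarrow> real (rank (A x0))) (at x0)"
proof -
  have "isCont A x0" using assms by (rule regular_at_imp_isCont)
  then show ?thesis
    unfolding tendsto_of_nat_iff
    using regular_at_pinv[OF assms] rank_eventually_eq_if_isCont_pinv regular_at_imp_isCont by blast
qed

end
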